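(* Consider the DSA algorithm described in the context, under conditions (a)–(c) on the weights and assuming every $f_{n,i}$ is differentiable and $\mu$-strongly convex with $L$-Lipschitz gradient. Then for any constant $\eta>0$ and every $t\ge0$, \begin{align*} \mathbb{E}\left[\|\mathbf{u}^{t+1}-\mathbf{u}^*\|_{\mathbf{G}}^2\mid\mathcal{F}^t\right]&\le\|\mathbf{u}^t-\mathbf{u}^*\|_{\mathbf{G}}^2-2\,\mathbb{E}\left[\|\mathbf{x}^{t+1}-\mathbf{x}^*\|_{\mathbf{I}+\mathbf{Z}-2\tilde{\mathbf{Z}}}^2\mid\mathcal{F}^t\right]+\frac{4\alpha L}{\eta}p^t\\ &\quad-\mathbb{E}\left[\|\mathbf{x}^{t+1}-\mathbf{x}^t\|_{\tilde{\mathbf{Z}}-2\alpha\eta\mathbf{I}}^2\mid\mathcal{F}^t\right]-\mathbb{E}\left[\|\mathbf{v}^{t+1}-\mathbf{v}^t\|^2\mid\mathcal{F}^t\right]\\ &\quad-\left(\frac{4\alpha\mu}{L}-\frac{2\alpha(2L-\mu)}{\eta}\right)\left(f(\mathbf{x}^{t})-f(\mathbf{x}^* )-\nabla f(\mathbf{x}^* )^T(\mathbf{x}^{t}-\mathbf{x}^* )\right). \end{align*}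
   Context: Problem: a connected network of $N$ nodes; node $n$ holds $q_n$ functions $f_{n,i}:\mathbb{R}^p\to\mathbb{R}$, each differentiable, $\mu$-strongly convex, with $L$-Lipschitz gradient; $f_n:=\frac1{q_n}\sum_i f_{n,i}$, $\tilde{\mathbf{x}}^*:=\arg\min_{\mathbf{x}}\sum_n f_n(\mathbf{x})$. For $\mathbf{x}=[\mathbf{x}_1;\dots;\mathbf{x}_N]\in\mathbb{R}^{Np}$, $f(\mathbf{x}):=\sum_n f_n(\mathbf{x}_n)$, $\mathbf{x}^*:=[\tilde{\mathbf{x}}^*;\dots;\tilde{\mathbf{x}}^*]$. Weights: $\mathbf{W},\tilde{\mathbf{W}}\in\mathbb{R}^{N\times N}$ with entries nonzero only for $m=n$ or $m$ a neighbor of $n$, satisfying (a) symmetry; (b) $\mathrm{null}(\mathbf{I}-\tilde{\mathbf{W}})\supseteq\mathrm{span}(\mathbf{1})$, $\mathrm{null}(\mathbf{I}-\mathbf{W})=\mathrm{span}(\mathbf{1})$, $\mathrm{null}(\tilde{\mathbf{W}}-\mathbf{W})=\mathrm{span}(\mathbf{1})$; (c) $\mathbf{W}\preceq\tilde{\mathbf{W}}\preceq(\mathbf{I}+\mathbf{W})/2$, $\tilde{\mathbf{W}}\succ0$. $\mathbf{Z}:=\mathbf{W}\otimes\mathbf{I}_p$, $\tilde{\mathbf{Z}}:=\tilde{\mathbf{W}}\otimes\mathbf{I}_p$, $\mathbf{U}:=(\tilde{\mathbf{Z}}-\mathbf{Z})^{1/2}$. DSA: stepsize $\alpha>0$, initial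 $\mathbf{x}_n^0$, $\mathbf{y}_{n,i}^0=\mathbf{x}_n^0$. At each $t\ge0$ node $n$ draws $i_n^t$ uniformly from $\{1,\dots,q_n\}$ independently of the past, sets $\hat{\mathbf{g}}_n^t:=\nabla f_{n,i_n^t}(\mathbf{x}_n^t)-\nabla f_{n,i_n^t}(\mathbf{y}_{n,i_n^t}^t)+\frac1{q_n}\sum_{i}\nabla f_{n,i}(\mathbf{y}_{n,i}^t)$, and $\mathbf{y}_{n,i}^{t+1}=\mathbf{x}_n^t$ if $i=i_n^t$, else $\mathbf{y}_{n,i}^{t+1}=\mathbf{y}_{n,i}^t$. With $\hat{\mathbf{g}}^t:=[\hat{\mathbf{g}}_1^t;\dots;\hat{\mathbf{g}}_N^t]$: $\mathbf{x}^1=\mathbf{Z}\mathbf{x}^0-\alpha\hat{\mathbf{g}}^0$, $\mathbf{x}^{t+1}=(\mathbf{I}+\mathbf{Z})\mathbf{x}^t-\tilde{\mathbf{Z}}\mathbf{x}^{t-1}-\alpha[\hat{\mathbf{g}}^t-\hat{\mathbf{g}}^{t-1}]$ for $t\ge1$. Dual variables $\mathbf{v}^t:=\sum_{s=0}^t\mathbf{U}\mathbf{x}^s$; $\mathbf{v}^*$ is the vector in the column space of $\mathbf{U}$ with $\alpha\nabla f(\mathbf{x}^* )+\mathbf{U}\mathbf{v}^*=\mathbf{0}$. Set $\mathbf{u}^t:=[\mathbf{x}^t;\mathbf{v}^t]$, $\mathbf{u}^*:=[\mathbf{x}^*;\mathbf{v}^*]$, $\mathbf{G}:=\mathrm{diag}(\tilde{\mathbf{Z}},\mathbf{I})\in\mathbb{R}^{2Np\times2Np}$.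 For a symmetric matrix $\mathbf{A}$, $\|\mathbf{z}\|_{\mathbf{A}}^2:=\mathbf{z}^T\mathbf{A}\mathbf{z}$. $\mathcal{F}^t$ is the sigma-algebra of the history up to time $t$. Define $$p^t:=\sum_{n=1}^N\frac1{q_n}\sum_{i=1}^{q_n}\left(f_{n,i}(\mathbf{y}_{n,i}^t)-f_{n,i}(\tilde{\mathbf{x}}^* )-\nabla f_{n,i}(\tilde{\mathbf{x}}^* )^T(\mathbf{y}_{n,i}^t-\tilde{\mathbf{x}}^* )\right).$$ *)

theory Defs
  imports "HOL-Analysis.Analysis"
begin

text \<open>Nodes are the elements of a finite type 'n; R^p is real^'p.
  A stacked vector x = [x_1;...;x_N] in R^{Np} is an element of real^'p^'n
  (row n is x_n).  An N x N matrix A acts on it as A \<otimes> I_p, i.e. by the matrix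
  product A ** x.  The local functions of node n are f n i, i < q n.\<close>

definition mu_strongly_convex :: "real \<Rightarrow> ('a::real_inner \<Rightarrow> real) \<Rightarrow> bool" where
  "mu_strongly_convex mu h \<longleftrightarrow> convex_on UNIV (\<lambda>z. h z - (mu / 2) * (norm z)\<^sup>2)"

definition psd :: "real^'n^'n \<Rightarrow> bool" where
  "psd A \<longleftrightarrow> (\<forall>z. 0 \<le> z \<bullet> (A *v z))"

definition pd :: "real^'n^'n \<Rightarrow> bool" where
  "pd A \<longleftrightarrow> (\<forall>z. z \<noteq> 0 \<longrightarrow> 0 < z \<bullet> (A *v z))"

definition msqrt :: "real^'n^'n \<Rightarrow> real^'n^'n" where
  "msqrt A = (THE S. transpose S = S \<and> psd S \<and> S ** S = A)"

definition qf :: "real^'n^'n \<Rightarrow> real^'p^'n \<Rightarrow> real" where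
  "qf A x = (\<Sum>n\<in>UNIV. \<Sum>m\<in>UNIV. A$n$m * (x$n \<bullet> x$m))"

definition ones :: "real^'n" where "ones = (\<chi> n. 1)"

definition ghat :: "('n \<Rightarrow> nat \<Rightarrow> real^'p \<Rightarrow> real^'p) \<Rightarrow> ('n \<Rightarrow> nat) \<Rightarrow> ('n \<Rightarrow> nat)
     \<Rightarrow> real^'p^'n \<Rightarrow> ('n \<Rightarrow> nat \<Rightarrow> real^'p) \<Rightarrow> real^'p^'n" where
  "ghat g q c x y = (\<chi> n. g n (c n) (x$n) - g n (c n) (y n (c n))
       + (1 / real (q n)) *\<^sub>R (\<Sum>i<q n. g n i (y n i)))"

definition yupd :: "('n \<Rightarrow> nat) \<Rightarrow> real^'p^'n \<Rightarrow> ('n \<Rightarrow> nat \<Rightarrow> real^'p) \<Rightarrow> ('n \<Rightarrow> nat \<Rightarrow> real^'p)" where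
  "yupd c x y = (\<lambda>n i. if i = c n then x$n else y n i)"

text \<open>DSA trajectory: dsa ... t = (x^t, y^t), where om t n = i_n^t is the index drawn
  by node n at time t.\<close>
fun dsa :: "real^'n^'n \<Rightarrow> real^'n^'n \<Rightarrow> real \<Rightarrow> ('n \<Rightarrow> nat \<Rightarrow> real^'p \<Rightarrow> real^'p)
     \<Rightarrow> ('n \<Rightarrow> nat) \<Rightarrow> real^'p^'n \<Rightarrow> (nat \<Rightarrow> 'n \<Rightarrow> nat) \<Rightarrow> nat
     \<Rightarrow> (real^'p^'n) \<times> ('n \<Rightarrow> nat \<Rightarrow> real^'p)" where
  "dsa W Wt \<alpha> g q x0 om 0 = (x0, \<lambda>n i. x0$n)"
| "dsa W Wt \<alpha> g q x0 om (Suc 0) =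
     (let x = fst (dsa W Wt \<alpha> g q x0 om 0); y = snd (dsa W Wt \<alpha> g q x0 om 0) in
      (W ** x - \<alpha> *\<^sub>R ghat g q (om 0) x y, yupd (om 0) x y))"
| "dsa W Wt \<alpha> g q x0 om (Suc (Suc t)) =
     (let x' = fst (dsa W Wt \<alpha> g q x0 om (Suc t)); y' = snd (dsa W Wt \<alpha> g q x0 om (Suc t));
          x = fst (dsa W Wt \<alpha> g q x0 om t); y = snd (dsa W Wt \<alpha> g q x0 om t) in
      ((mat 1 + W) ** x' - Wt ** x
         - \<alpha> *\<^sub>R (ghat g q (om (Suc t)) x' y' - ghat g q (om t) x y),
       yupd (om (Suc t)) x' y'))"

definition dsa_v :: "real^'n^'n \<Rightarrow> real^'n^'n \<Rightarrow> real \<Rightarrow> ('n \<Rightarrow> nat \<Rightarrow> real^'p \<Rightarrow> real^'p)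
     \<Rightarrow> ('n \<Rightarrow> nat) \<Rightarrow> real^'p^'n \<Rightarrow> (nat \<Rightarrow> 'n \<Rightarrow> nat) \<Rightarrow> nat \<Rightarrow> real^'p^'n" where
  "dsa_v W Wt \<alpha> g q x0 om t = (\<Sum>s\<le>t. msqrt (Wt - W) ** fst (dsa W Wt \<alpha> g q x0 om s))"

text \<open>Conditional expectation given F^t of a quantity X depending on the draws om:
  the draws i^t = om t are uniform on prod_n {0..<q n}, independent of the past,
  so E[X | F^t](om) is the average of X over all replacements of om t.\<close>
definition condE :: "('n::finite \<Rightarrow> nat) \<Rightarrow> nat \<Rightarrow> ((nat \<Rightarrow> 'n \<Rightarrow> nat) \<Rightarrow> real)
     \<Rightarrow> (nat \<Rightarrow> 'n \<Rightarrow> nat) \<Rightarrow> real" where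
  "condE q t X om = (\<Sum>c\<in>PiE UNIV (\<lambda>n. {..<q n}). X (om(t := c))) / (\<Prod>n\<in>UNIV. real (q n))"

end

theory Submission
  imports Defs
begin

text \<open>With \<open>U = (Wt - W)^(1/2)\<close> and \<open>v_t = U x_0 + ... + U x_t\<close>, DSA is the primal-dual
  iteration \<open>x_(t+1) = Wt x_t - U v_t - \<alpha> ghat_t\<close>, \<open>v_(t+1) = v_t + U x_(t+1)\<close>, while the
  optimum satisfies \<open>W x* = Wt x* = x*\<close> and \<open>\<alpha> \<nabla>f(x*) + U v* = 0\<close>. Subtracting, pairing
  with \<open>x_(t+1) - x*\<close> and applying Young's inequality gives a deterministic one-step bound in
  which the random draw only enters through \<open>-2\<alpha> (x_t - x*)\<cdot>e\<close> and \<open>\<alpha>/(2\<eta>) |e|^2\<close>,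
  where \<open>e = ghat_t - \<nabla>f(x*)\<close>. Averaged over the independent uniform draws of the nodes,
  \<open>e\<close> has mean \<open>\<nabla>f(x_t) - \<nabla>f(x*)\<close>, so the first term is controlled by strong
  monotonicity and the descent lemma; the second moment of \<open>e\<close> is at most \<open>4L\<close> times the
  Bregman gaps of \<open>f\<close> at \<open>x_t\<close> and at the memory points, by co-coercivity of the gradients
  and a variance bound.\<close>

section \<open>Matrices acting on stacked vectors\<close>

lemma matrix_diff_ldistrib: "(A::'a::ring_1^'m^'n) ** (B - C) = A ** B - A ** C"
  by (vector matrix_matrix_mult_def sum_subtractf[symmetric] right_diff_distrib)

lemma matrix_add_rdistrib: "((A::'a::semiring_1^'m^'n) + B) ** C = A ** C + B ** C"
  by (vector matrix_matrix_mult_def sum.distrib[symmetric] distrib_right)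

lemma matrix_diff_rdistrib: "((A::'a::ring_1^'m^'n) - B) ** C = A ** C - B ** C"
  by (vector matrix_matrix_mult_def sum_subtractf[symmetric] left_diff_distrib)

lemma transpose_diff: "transpose (A - B) = transpose A - transpose (B::'a::ab_group_add^'n^'m)"
  by (simp add: transpose_def vec_eq_iff)

lemma matrix_mult_row: "((A::real^'m^'n) ** (x::real^'p^'m))$n = (\<Sum>m\<in>UNIV. A$n$m *\<^sub>R x$m)"
  by (simp add: matrix_matrix_mult_def vec_eq_iff)

lemma qf_eq_inner: "qf A x = x \<bullet> (A ** x)"
  by (subst inner_vec_def) (simp add: qf_def matrix_mult_row inner_sum_right)

lemma inner_matrix_mult_symmetric:
  fixes A :: "real^'n^'n" and x y :: "real^'p^'n"
  assumes "transpose A = A"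
  shows "x \<bullet> (A ** y) = (A ** x) \<bullet> y"
proof -
  have sym: "A$n$m = A$m$n" for n m
    using assms by (metis transpose_def vec_lambda_beta)
  have "x \<bullet> (A ** y) = (\<Sum>n\<in>UNIV. \<Sum>m\<in>UNIV. A$n$m * (x$n \<bullet> y$m))"
    by (subst inner_vec_def) (simp add: matrix_mult_row inner_sum_right)
  also have "\<dots> = (\<Sum>m\<in>UNIV. \<Sum>n\<in>UNIV. A$n$m * (x$n \<bullet> y$m))"
    by (rule sum.swap)
  also have "\<dots> = (A ** x) \<bullet> y"
    by (subst inner_vec_def) (simp add: matrix_mult_row inner_sum_left sym)
  finally show ?thesis .
qed

lemma matrix_mult_consensus_eq_0:
  fixes A :: "real^'n^'n"
  assumes "A *v ones = 0"
  shows "A ** (\<chi> n. z) = (0::real^'p^'n)"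
proof -
  have "(\<Sum>m\<in>UNIV. A$n$m) = 0" for n
    using assms by (simp add: vec_eq_iff matrix_vector_mult_def ones_def)
  then show ?thesis
    by (simp add: vec_eq_iff matrix_mult_row scaleR_sum_left[symmetric])
qed

lemma matrix_mult_consensus_fixed:
  fixes A :: "real^'n^'n"
  assumes "(mat 1 - A) *v ones = 0"
  shows "A ** (\<chi> n. z) = ((\<chi> n. z)::real^'p^'n)"
proof -
  have "(mat 1 - A) ** (\<chi> n. z) = (0::real^'p^'n)"
    using assms by (rule matrix_mult_consensus_eq_0)
  then show ?thesis
    by (simp add: matrix_diff_rdistrib)
qed

section \<open>The positive semidefinite square root\<close>

lemma inner_matrix_vector_symmetric:
  fixes A :: "real^'n^'n"
  assumes "transpose A = A"
  shows "x \<bullet> (A *v y) = (A *v x) \<bullet> y"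
  by (metis assms dot_lmul_matrix vector_transpose_matrix)

lemma linear_le_quadratic_imp_zero:
  fixes c d :: real
  assumes "\<And>t. 2 * t * c \<le> t\<^sup>2 * d"
  shows "c = 0"
proof (rule ccontr)
  assume "c \<noteq> 0"
  then have cc: "0 < c * c" by (metis not_real_square_gt_zero)
  define s where "s = 1 / (\<bar>d\<bar> + 1)"
  have s: "0 < s" "s * \<bar>d\<bar> < 1"
    by (auto simp: s_def field_simps)
  have "s * (c * c) * 2 \<le> s * (c * c) * (s * d)"
    using assms[of "s * c"] by (simp add: power2_eq_square algebra_simps)
  then have "2 \<le> s * d"
    using s cc by (simp add: mult_le_cancel_left_pos)
  then show False
    using s abs_ge_self[of d] mult_left_mono[of d "\<bar>d\<bar>" s] by linarith
qed

lemma symmetric_matrix_invariant_subspace_eigenvector: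
  fixes A :: "real^'n^'n"
  assumes sym: "transpose A = A" and V: "subspace V" and nz: "V \<noteq> {0}"
    and inv: "\<And>x. x \<in> V \<Longrightarrow> A *v x \<in> V"
  shows "\<exists>e\<in>V. norm e = 1 \<and> A *v e = (e \<bullet> (A *v e)) *\<^sub>R e"
proof -
  define K where "K = V \<inter> sphere 0 1"
  have "compact K"
    unfolding K_def using closed_subspace[OF V]
    by (simp add: bounded_Int compact_eq_bounded_closed closed_Int)
  moreover have "K \<noteq> {}"
  proof -
    obtain x where x: "x \<in> V" "x \<noteq> 0" using nz V subspace_0 by blast
    then have "(1 / norm x) *\<^sub>R x \<in> K"
      using V by (simp add: K_def subspace_scale)
    then show ?thesis by blast
  qed
  moreover have "continuous_on K (\<lambda>x. x \<bullet> (A *v x))"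
    by (intro continuous_on_inner continuous_on_id matrix_vector_mult_linear_continuous_on)
  ultimately obtain e where eK: "e \<in> K" and emax: "\<And>y. y \<in> K \<Longrightarrow> y \<bullet> (A *v y) \<le> e \<bullet> (A *v e)"
    using continuous_attains_sup by metis
  define l where "l = e \<bullet> (A *v e)"
  have eV: "e \<in> V" and ee: "e \<bullet> e = 1"
    using eK by (auto simp: K_def dot_square_norm)
  \<comment> \<open>At the maximiser of the Rayleigh quotient, every direction orthogonal to e is orthogonal to A e.\<close>
  have stationary: "h \<bullet> (A *v e) = 0" if hV: "h \<in> V" and he: "h \<bullet> e = 0" for h
  proof (rule linear_le_quadratic_imp_zero)
    fix t :: real
    define z where "z = e + t *\<^sub>R h"
    have zz: "z \<bullet> z = 1 + t\<^sup>2 * (h \<bullet> h)"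
      using ee he by (simp add: z_def inner_add_left inner_add_right inner_commute power2_eq_square)
    then have zpos: "0 < z \<bullet> z"
      by (metis add_pos_nonneg inner_ge_zero zero_le_power2 mult_nonneg_nonneg zero_less_one)
    have "(1 / norm z) *\<^sub>R z \<in> K"
      using zpos V eV hV by (simp add: K_def z_def subspace_add subspace_scale)
    then have "((1 / norm z) *\<^sub>R z) \<bullet> (A *v ((1 / norm z) *\<^sub>R z)) \<le> l"
      using emax l_def by blast
    then have "(z \<bullet> (A *v z)) / (norm z)\<^sup>2 \<le> l"
      by (simp add: matrix_vector_mult_scaleR power2_eq_square)
    then have "z \<bullet> (A *v z) \<le> l * (z \<bullet> z)"
      using zpos by (simp add: dot_square_norm divide_le_eq)
    moreover have "z \<bullet> (A *v z) = l + 2 * t * (h \<bullet> (A *v e)) + t\<^sup>2 * (h \<bullet> (A *v h))"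
      using inner_matrix_vector_symmetric[OF sym, of h e] inner_commute[of "A *v h" e]
      by (simp add: z_def l_def power2_eq_square algebra_simps)
    ultimately show "2 * t * (h \<bullet> (A *v e)) \<le> t\<^sup>2 * (l * (h \<bullet> h) - h \<bullet> (A *v h))"
      using zz by (simp add: algebra_simps)
  qed
  define h where "h = A *v e - l *\<^sub>R e"
  have "h \<in> V" using V eV inv by (simp add: h_def subspace_diff subspace_scale)
  moreover have he: "h \<bullet> e = 0"
    using ee inner_commute[of "A *v e" e] by (simp add: h_def l_def inner_diff_left)
  ultimately have "h \<bullet> h = 0"
    using stationary by (simp add: h_def inner_diff_right)
  then show ?thesis
    using eV eK by (auto simp: h_def l_def K_def)
qed

lemma symmetric_matrix_invariant_subspace_eigenbasis:
  fixes A :: "real^'n^'n"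
  assumes sym: "transpose A = A" and "subspace V" and "\<And>x. x \<in> V \<Longrightarrow> A *v x \<in> V"
  shows "\<exists>B. B \<subseteq> V \<and> span B = V \<and> pairwise orthogonal B
           \<and> (\<forall>b\<in>B. norm b = 1 \<and> A *v b = (b \<bullet> (A *v b)) *\<^sub>R b)"
  using assms(2,3)
proof (induction "dim V" arbitrary: V rule: less_induct)
  case less
  show ?case
  proof (cases "V = {0}")
    case True
    then show ?thesis by (intro exI[of _ "{}"]) auto
  next
    case False
    obtain e where eV: "e \<in> V" and en: "norm e = 1" and eA: "A *v e = (e \<bullet> (A *v e)) *\<^sub>R e"
      using symmetric_matrix_invariant_subspace_eigenvector[OF sym less.prems(1) False less.prems(2)]
      by blast
    have ee: "e \<bullet> e = 1" using en by (simp add: dot_square_norm)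
    define V' where "V' = {x\<in>V. e \<bullet> x = 0}"
    have V': "subspace V'"
      using less.prems(1) by (auto simp: V'_def subspace_def inner_add_right)
    have inv': "A *v x \<in> V'" if "x \<in> V'" for x
    proof -
      have "e \<bullet> (A *v x) = (e \<bullet> (A *v e)) * (e \<bullet> x)"
        using inner_matrix_vector_symmetric[OF sym, of e x] by (metis eA inner_scaleR_left)
      then show ?thesis using that less.prems(2) by (simp add: V'_def)
    qed
    have "e \<notin> V'" using ee by (simp add: V'_def)
    moreover have "V' \<subseteq> V" by (auto simp: V'_def)
    ultimately have "V' \<subset> V" using eV by blast
    then have "dim V' < dim V"
      using dim_psubset V' less.prems(1) by (metis span_eq_iff)
    then obtain B' where B': "B' \<subseteq> V'" "span B' = V'" "pairwise orthogonal B'"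
        "\<forall>b\<in>B'. norm b = 1 \<and> A *v b = (b \<bullet> (A *v b)) *\<^sub>R b"
      using less.hyps V' inv' by blast
    have "V \<subseteq> span (insert e B')"
    proof
      fix x assume x: "x \<in> V"
      have "x - (e \<bullet> x) *\<^sub>R e \<in> span B'"
        using x eV less.prems(1) ee B'(2)
        by (simp add: V'_def subspace_diff subspace_scale inner_diff_right)
      then show "x \<in> span (insert e B')"
        by (metis span_breakdown_eq)
    qed
    moreover have "span (insert e B') \<subseteq> V"
      using B'(1) eV less.prems(1) by (intro span_minimal) (auto simp: V'_def)
    ultimately show ?thesis
      using B' eV en eA
      by (intro exI[of _ "insert e B'"])
        (auto simp: pairwise_insert V'_def orthogonal_def inner_commute)
  qed
qed

lemma psd_square_root_on_eigenvector:
  fixes A T :: "real^'n^'n"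
  assumes symT: "transpose T = T" and psdT: "psd T" and TT: "T ** T = A"
    and l: "0 \<le> l" and Ab: "A *v b = l *\<^sub>R b"
  shows "T *v b = sqrt l *\<^sub>R b"
proof -
  define s where "s = sqrt l"
  define y where "y = T *v b - s *\<^sub>R b"
  \<comment> \<open>y is an eigenvector of T for the eigenvalue -s, which positive semidefiniteness rules out.\<close>
  have Ty: "T *v y = - s *\<^sub>R y"
    using Ab l TT[symmetric]
    by (simp add: y_def s_def matrix_vector_mul_assoc algebra_simps)
  have "0 \<le> y \<bullet> (T *v y)" using psdT by (simp add: psd_def)
  then have yy: "s * (y \<bullet> y) \<le> 0" using Ty by simp
  have "y = 0"
  proof (cases "s = 0")
    case True
    then have "y \<bullet> y = b \<bullet> (T *v y)"
      using inner_matrix_vector_symmetric[OF symT, of b y] by (simp add: y_def inner_commute)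
    then show "y = 0" using Ty True by simp
  next
    case False
    then have "0 < s" using l by (simp add: s_def)
    then have "y \<bullet> y \<le> 0" using yy by (simp add: mult_le_0_iff)
    then show "y = 0" by (metis antisym inner_ge_zero inner_eq_zero_iff)
  qed
  then show ?thesis by (simp add: y_def s_def)
qed

lemma matrix_eq_on_spanning_set:
  fixes M N :: "real^'n^'m"
  assumes "span B = UNIV" and "\<And>b. b \<in> B \<Longrightarrow> M *v b = N *v b"
  shows "M = N"
proof -
  have "M *v x = N *v x" for x
  proof -
    have "x \<in> span B" using assms(1) by simp
    then show ?thesis
      by (rule span_induct)
        (auto simp: assms(2) subspace_def matrix_vector_right_distrib matrix_vector_mult_scaleR)
  qed
  then show ?thesis by (simp add: matrix_eq)
qed

lemma symmetric_psd_matrix_ex1_square_root: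
  fixes A :: "real^'n^'n"
  assumes sym: "transpose A = A" and psdA: "psd A"
  shows "\<exists>!S. transpose S = S \<and> psd S \<and> S ** S = A"
proof -
  obtain B where sp: "span B = UNIV" and po: "pairwise orthogonal B"
    and unit: "\<And>b. b \<in> B \<Longrightarrow> norm b = 1"
    and eig0: "\<And>b. b \<in> B \<Longrightarrow> A *v b = (b \<bullet> (A *v b)) *\<^sub>R b"
    using symmetric_matrix_invariant_subspace_eigenbasis[OF sym subspace_UNIV] by auto
  have fin: "finite B" using po by (rule pairwise_orthogonal_imp_finite)
  define lam where "lam b = b \<bullet> (A *v b)" for b
  have eig: "A *v b = lam b *\<^sub>R b" if "b \<in> B" for b
    using eig0[OF that] by (simp only: lam_def)
  have lam: "0 \<le> lam b" for b using psdA by (simp add: psd_def lam_def)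
  have ortho: "b \<bullet> b' = (if b' = b then 1 else 0)" if "b \<in> B" "b' \<in> B" for b b'
    using that unit po by (auto simp: pairwise_def orthogonal_def dot_square_norm)
  define S :: "real^'n^'n" where "S = (\<chi> i j. \<Sum>b\<in>B. sqrt (lam b) * b$i * b$j)"
  have Sv: "S *v x = (\<Sum>b\<in>B. (sqrt (lam b) * (x \<bullet> b)) *\<^sub>R b)" for x
    by (simp add: vec_eq_iff S_def matrix_vector_mult_def inner_vec_def sum_distrib_left
        sum_distrib_right mult_ac) (subst sum.swap, simp add: mult_ac)
  have bS: "S *v b = sqrt (lam b) *\<^sub>R b" if "b \<in> B" for b
  proof -
    have "S *v b = (\<Sum>b'\<in>B. if b' = b then sqrt (lam b) *\<^sub>R b else 0)"
      unfolding Sv by (rule sum.cong) (auto simp: ortho[OF _ that] ortho[OF that])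
    then show ?thesis using that fin by simp
  qed
  have "transpose S = S" by (simp add: S_def transpose_def vec_eq_iff mult_ac)
  moreover have "psd S"
    unfolding psd_def
  proof
    fix x
    have "x \<bullet> (S *v x) = (\<Sum>b\<in>B. sqrt (lam b) * (x \<bullet> b)\<^sup>2)"
      by (simp add: Sv inner_sum_right power2_eq_square mult_ac)
    then show "0 \<le> x \<bullet> (S *v x)" by (simp add: sum_nonneg lam)
  qed
  moreover have "S ** S = A"
  proof (rule matrix_eq_on_spanning_set[OF sp])
    fix b assume "b \<in> B"
    then have "S *v (S *v b) = (sqrt (lam b) * sqrt (lam b)) *\<^sub>R b"
      by (simp add: bS matrix_vector_mult_scaleR)
    then show "(S ** S) *v b = A *v b"
      using \<open>b \<in> B\<close> lam[of b] by (simp add: eig matrix_vector_mul_assoc)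
  qed
  moreover have "T = S" if "transpose T = T" "psd T" "T ** T = A" for T
    using that psd_square_root_on_eigenvector[OF _ _ _ lam eig] bS
    by (intro matrix_eq_on_spanning_set[OF sp]) auto
  ultimately show ?thesis by blast
qed

text \<open>\<open>msqrt\<close> is a definite description, so it needs uniqueness as well as existence.\<close>
lemma msqrt_psd_square_root:
  fixes A :: "real^'n^'n"
  assumes "transpose A = A" and "psd A"
  shows "transpose (msqrt A) = msqrt A" "psd (msqrt A)" "msqrt A ** msqrt A = A"
  using theI'[OF symmetric_psd_matrix_ex1_square_root[OF assms]] by (simp_all add: msqrt_def)

section \<open>Smooth strongly convex functions\<close>

definition bregman :: "('a::real_inner \<Rightarrow> real) \<Rightarrow> ('a \<Rightarrow> 'a) \<Rightarrow> 'a \<Rightarrow> 'a \<Rightarrow> real" where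
  "bregman h G x y = h y - h x - G x \<bullet> (y - x)"

lemma has_real_derivative_along_line:
  fixes h :: "'a::real_inner \<Rightarrow> real"
  assumes "\<And>z. (h has_derivative (\<lambda>k. G z \<bullet> k)) (at z)"
  shows "((\<lambda>t. h (x + t *\<^sub>R d)) has_real_derivative G (x + t *\<^sub>R d) \<bullet> d) (at t)"
proof -
  have "((\<lambda>t. x + t *\<^sub>R d) has_derivative (\<lambda>s. s *\<^sub>R d)) (at t)"
    by (auto intro!: derivative_eq_intros)
  from has_derivative_compose[OF this assms]
  show ?thesis by (simp add: has_field_derivative_def mult.commute[of _ "G (x + t *\<^sub>R d) \<bullet> d"])
qed

lemma strongly_convex_bregman_lower_bound:
  fixes h :: "'a::real_inner \<Rightarrow> real"
  assumes dh: "\<And>z. (h has_derivative (\<lambda>k. G z \<bullet> k)) (at z)"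
    and sc: "mu_strongly_convex \<mu> h"
  shows "\<mu> / 2 * (norm (y - x))\<^sup>2 \<le> bregman h G x y"
proof -
  define d where "d = y - x"
  define k where "k z = h z - \<mu> / 2 * (norm z)\<^sup>2" for z
  define \<phi> where "\<phi> t = k (x + t *\<^sub>R d)" for t
  have "convex_on UNIV k"
    using sc by (simp add: mu_strongly_convex_def k_def[abs_def])
  then have "convex_on UNIV \<phi>"
  proof (intro convex_onI)
    fix t a b :: real assume "0 < t" "t < 1"
    with \<open>convex_on UNIV k\<close>
    have "k ((1 - t) *\<^sub>R (x + a *\<^sub>R d) + t *\<^sub>R (x + b *\<^sub>R d))
        \<le> (1 - t) * k (x + a *\<^sub>R d) + t * k (x + b *\<^sub>R d)"
      by (intro convex_onD) auto
    then show "\<phi> ((1 - t) *\<^sub>R a + t *\<^sub>R b) \<le> (1 - t) * \<phi> a + t * \<phi> b"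
      by (simp add: \<phi>_def algebra_simps)
  qed simp
  moreover have norm_line: "(norm (x + t *\<^sub>R d))\<^sup>2 = (norm x)\<^sup>2 + 2 * t * (x \<bullet> d) + t\<^sup>2 * (norm d)\<^sup>2" for t
    by (simp only: power2_norm_eq_inner) (simp add: inner_commute power2_eq_square algebra_simps)
  have "(\<phi> has_real_derivative G x \<bullet> d - \<mu> * (x \<bullet> d)) (at 0)"
    unfolding \<phi>_def[abs_def] k_def norm_line
    using has_real_derivative_along_line[OF dh, of x d 0]
    by (auto intro!: derivative_eq_intros)
  ultimately have "\<phi> 1 - \<phi> 0 \<ge> (G x \<bullet> d - \<mu> * (x \<bullet> d)) * (1 - 0)"
    by (intro convex_on_imp_above_tangent[where A = UNIV]) auto
  moreover have "\<phi> 1 = h y - \<mu> / 2 * ((norm x)\<^sup>2 + 2 * (x \<bullet> d) + (norm d)\<^sup>2)"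
    using norm_line[of 1] by (simp add: \<phi>_def k_def d_def)
  moreover have "\<phi> 0 = h x - \<mu> / 2 * (norm x)\<^sup>2"
    by (simp add: \<phi>_def k_def)
  ultimately show ?thesis
    unfolding bregman_def d_def[symmetric] by (simp add: algebra_simps)
qed

lemma strongly_convex_bregman_nonneg:
  fixes h :: "'a::real_inner \<Rightarrow> real"
  assumes "\<And>z. (h has_derivative (\<lambda>k. G z \<bullet> k)) (at z)"
    and "mu_strongly_convex \<mu> h" and "0 \<le> \<mu>"
  shows "0 \<le> bregman h G x y"
proof -
  have "\<mu> / 2 * (norm (y - x))\<^sup>2 \<le> bregman h G x y"
    using assms(1,2) by (rule strongly_convex_bregman_lower_bound)
  moreover have "0 \<le> \<mu> / 2 * (norm (y - x))\<^sup>2"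
    using assms(3) by simp
  ultimately show ?thesis by linarith
qed

lemma lipschitz_gradient_bregman_upper_bound:
  fixes h :: "'a::real_inner \<Rightarrow> real"
  assumes dh: "\<And>z. (h has_derivative (\<lambda>k. G z \<bullet> k)) (at z)"
    and lip: "L-lipschitz_on UNIV G"
  shows "bregman h G x y \<le> L / 2 * (norm (y - x))\<^sup>2"
proof -
  define d where "d = y - x"
  define \<theta> where "\<theta> t = h (x + t *\<^sub>R d) - t * (G x \<bullet> d) - L / 2 * t\<^sup>2 * (norm d)\<^sup>2" for t
  have "\<theta> 1 \<le> \<theta> 0"
  proof (rule DERIV_nonpos_imp_nonincreasing[of 0 1 \<theta>])
    fix t :: real assume t: "0 \<le> t" "t \<le> 1"
    have "(\<theta> has_real_derivative G (x + t *\<^sub>R d) \<bullet> d - G x \<bullet> d - L * t * (norm d)\<^sup>2) (at t)"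
      unfolding \<theta>_def[abs_def] using has_real_derivative_along_line[OF dh, of x d t]
      by (auto intro!: derivative_eq_intros)
    moreover have "(G (x + t *\<^sub>R d) - G x) \<bullet> d \<le> L * t * (norm d)\<^sup>2"
    proof -
      have "(G (x + t *\<^sub>R d) - G x) \<bullet> d \<le> norm (G (x + t *\<^sub>R d) - G x) * norm d"
        by (rule norm_cauchy_schwarz)
      also have "\<dots> \<le> L * norm (t *\<^sub>R d) * norm d"
        using lipschitz_onD[OF lip, of "x + t *\<^sub>R d" x] by (simp add: dist_norm mult_right_mono)
      also have "\<dots> = L * t * (norm d)\<^sup>2"
        using t by (simp add: power2_eq_square)
      finally show ?thesis .
    qed
    ultimately show "\<exists>y. (\<theta> has_real_derivative y) (at t) \<and> y \<le> 0"
      by (auto simp: inner_diff_left)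
  qed simp
  then show ?thesis
    by (simp add: \<theta>_def bregman_def d_def)
qed

lemma strongly_convex_gradient_monotone:
  fixes h :: "'a::real_inner \<Rightarrow> real"
  assumes dh: "\<And>z. (h has_derivative (\<lambda>k. G z \<bullet> k)) (at z)"
    and sc: "mu_strongly_convex \<mu> h"
  shows "\<mu> * (norm (y - x))\<^sup>2 \<le> (y - x) \<bullet> (G y - G x)"
proof -
  have "bregman h G x y + bregman h G y x = (y - x) \<bullet> (G y - G x)"
    by (simp add: bregman_def inner_diff_left inner_diff_right inner_commute)
  moreover have "\<mu> / 2 * (norm (y - x))\<^sup>2 \<le> bregman h G x y"
    and "\<mu> / 2 * (norm (x - y))\<^sup>2 \<le> bregman h G y x"
    using dh sc by (rule strongly_convex_bregman_lower_bound)+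
  ultimately show ?thesis
    by (simp add: norm_minus_commute)
qed

lemma strongly_convex_lipschitz_gradient_mu_le_L:
  fixes h :: "'a::real_inner \<Rightarrow> real" and x y :: 'a
  assumes dh: "\<And>z. (h has_derivative (\<lambda>k. G z \<bullet> k)) (at z)"
    and sc: "mu_strongly_convex \<mu> h" and lip: "L-lipschitz_on UNIV G"
    and "x \<noteq> y"
  shows "\<mu> \<le> L"
proof -
  have "\<mu> / 2 * (norm (y - x))\<^sup>2 \<le> L / 2 * (norm (y - x))\<^sup>2"
    using strongly_convex_bregman_lower_bound[OF dh sc] lipschitz_gradient_bregman_upper_bound[OF dh lip]
    by (rule order_trans)
  then show ?thesis
    using \<open>x \<noteq> y\<close> by simp
qed

lemma bregman_le_inner_gradient_diff:
  fixes h :: "'a::real_inner \<Rightarrow> real"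
  assumes dh: "\<And>z. (h has_derivative (\<lambda>k. G z \<bullet> k)) (at z)"
    and sc: "mu_strongly_convex \<mu> h" and lip: "L-lipschitz_on UNIV G"
    and \<mu>: "0 \<le> \<mu>" and L: "0 < L"
  shows "2 * \<mu> / L * bregman h G x y \<le> (y - x) \<bullet> (G y - G x)"
proof -
  have "2 * \<mu> / L * bregman h G x y \<le> 2 * \<mu> / L * (L / 2 * (norm (y - x))\<^sup>2)"
    using lipschitz_gradient_bregman_upper_bound[OF dh lip] \<mu> L by (intro mult_left_mono) auto
  also have "\<dots> = \<mu> * (norm (y - x))\<^sup>2"
    using L by simp
  also have "\<dots> \<le> (y - x) \<bullet> (G y - G x)"
    using dh sc by (rule strongly_convex_gradient_monotone)
  finally show ?thesis .
qed

lemma lipschitz_gradient_norm_diff_le_bregman: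
  fixes h :: "'a::real_inner \<Rightarrow> real"
  assumes dh: "\<And>z. (h has_derivative (\<lambda>k. G z \<bullet> k)) (at z)"
    and sc: "mu_strongly_convex \<mu> h" and \<mu>: "0 \<le> \<mu>"
    and lip: "L-lipschitz_on UNIV G" and L: "0 < L"
  shows "(norm (G y - G x))\<^sup>2 \<le> 2 * L * bregman h G x y"
proof -
  define \<delta> where "\<delta> = G y - G x"
  \<comment> \<open>Bound h at z from below by convexity at x and from above by the descent lemma at y.\<close>
  define z where "z = y - (1 / L) *\<^sub>R \<delta>"
  have "0 \<le> bregman h G x z"
    using dh sc \<mu> by (rule strongly_convex_bregman_nonneg)
  moreover have "bregman h G y z \<le> L / 2 * (norm (z - y))\<^sup>2"
    by (rule lipschitz_gradient_bregman_upper_bound[OF dh lip])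
  moreover have "(norm (z - y))\<^sup>2 = (\<delta> \<bullet> \<delta>) / L\<^sup>2"
    unfolding power2_norm_eq_inner using L by (simp add: z_def field_simps power2_eq_square)
  ultimately have "G x \<bullet> (z - x) - G y \<bullet> (z - y) \<le> h y - h x + (\<delta> \<bullet> \<delta>) / (2 * L)"
    using L by (simp add: bregman_def power2_eq_square)
  moreover have "G x \<bullet> (z - x) - G y \<bullet> (z - y) = G x \<bullet> (y - x) + ((G y - G x) \<bullet> \<delta>) / L"
    using L by (simp add: z_def inner_diff_right inner_diff_left inner_add_right field_simps)
  ultimately have "(\<delta> \<bullet> \<delta>) / (2 * L) \<le> bregman h G x y"
    by (simp add: bregman_def field_simps flip: \<delta>_def)
  then show ?thesis
    using L by (simp add: \<delta>_def power2_norm_eq_inner field_simps)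
qed

section \<open>The SAGA gradient estimator\<close>

lemma sum_norm_sq_centered_le:
  fixes z :: "nat \<Rightarrow> 'a::real_inner"
  shows "(\<Sum>i<q. (norm (z i - (1 / real q) *\<^sub>R (\<Sum>j<q. z j)))\<^sup>2) \<le> (\<Sum>i<q. (norm (z i))\<^sup>2)"
proof (cases "q = 0")
  case False
  define m where "m = (1 / real q) *\<^sub>R (\<Sum>j<q. z j)"
  have sum_z: "(\<Sum>j<q. z j) = real q *\<^sub>R m" using False by (simp add: m_def)
  have "(\<Sum>i<q. (norm (z i - m))\<^sup>2) = (\<Sum>i<q. (norm (z i))\<^sup>2 - 2 * (z i \<bullet> m) + (norm m)\<^sup>2)"
    by (simp add: power2_norm_eq_inner inner_commute algebra_simps)
  also have "\<dots> = (\<Sum>i<q. (norm (z i))\<^sup>2) - 2 * ((\<Sum>i<q. z i) \<bullet> m) + real q * (norm m)\<^sup>2"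
    by (simp add: sum.distrib sum_subtractf sum_distrib_left inner_sum_left)
  also have "\<dots> = (\<Sum>i<q. (norm (z i))\<^sup>2) - real q * (norm m)\<^sup>2"
    by (simp add: sum_z power2_norm_eq_inner)
  finally show ?thesis by (simp add: m_def)
qed simp

lemma norm_diff_sq_le: "(norm (a - b))\<^sup>2 \<le> 2 * (norm a)\<^sup>2 + 2 * (norm b)\<^sup>2" for a b :: "'a::real_inner"
proof -
  have "(norm (a - b))\<^sup>2 + (norm (a + b))\<^sup>2 = 2 * (norm a)\<^sup>2 + 2 * (norm b)\<^sup>2"
    by (simp add: power2_norm_eq_inner inner_diff_left inner_diff_right inner_add_left
        inner_add_right inner_commute)
  then show ?thesis by (smt (verit) zero_le_power2)
qed

text \<open>One node's component of \<open>ghat - \<nabla>f(xs)\<close> when it draws index \<open>i\<close>.\<close>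
definition saga_error :: "nat \<Rightarrow> (nat \<Rightarrow> 'a::real_vector \<Rightarrow> 'a) \<Rightarrow> 'a \<Rightarrow> (nat \<Rightarrow> 'a) \<Rightarrow> 'a \<Rightarrow> nat \<Rightarrow> 'a"
  where "saga_error q g x y xs i =
    g i x - g i (y i) + (1 / real q) *\<^sub>R (\<Sum>j<q. g j (y j)) - (1 / real q) *\<^sub>R (\<Sum>j<q. g j xs)"

lemma sum_saga_error:
  assumes "0 < q"
  shows "(\<Sum>i<q. saga_error q g x y xs i) = (\<Sum>i<q. g i x - g i xs)"
  using assms by (simp add: saga_error_def sum.distrib sum_subtractf sum_constant_scaleR)

locale smooth_strongly_convex_family =
  fixes f :: "nat \<Rightarrow> 'a::real_inner \<Rightarrow> real" and g :: "nat \<Rightarrow> 'a \<Rightarrow> 'a"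
    and q :: nat and \<mu> L :: real
  assumes has_gradient: "\<And>i x. i < q \<Longrightarrow> (f i has_derivative (\<lambda>h. g i x \<bullet> h)) (at x)"
    and strongly_convex: "\<And>i. i < q \<Longrightarrow> mu_strongly_convex \<mu> (f i)"
    and lipschitz_gradient: "\<And>i. i < q \<Longrightarrow> L-lipschitz_on UNIV (g i)"
    and mu_nonneg: "0 \<le> \<mu>" and L_pos: "0 < L"
begin

lemma mean_bregman_nonneg: "0 \<le> (1 / real q) * (\<Sum>i<q. bregman (f i) (g i) x (y i))"
  by (intro mult_nonneg_nonneg sum_nonneg strongly_convex_bregman_nonneg[where \<mu> = \<mu>]
      has_gradient strongly_convex mu_nonneg) auto

lemma mu_le_L:
  fixes x y :: 'a
  assumes "0 < q" and "x \<noteq> y"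
  shows "\<mu> \<le> L"
  using assms by (intro strongly_convex_lipschitz_gradient_mu_le_L[where h = "f 0" and G = "g 0" and x = x and y = y]
      has_gradient strongly_convex lipschitz_gradient)

lemma mean_inner_saga_error_ge:
  assumes "0 < q"
  shows "2 * \<mu> / L * ((1 / real q) * (\<Sum>i<q. bregman (f i) (g i) xs x))
    \<le> (1 / real q) * (\<Sum>i<q. (x - xs) \<bullet> saga_error q g x y xs i)"
proof -
  have "2 * \<mu> / L * (\<Sum>i<q. bregman (f i) (g i) xs x)
      = (\<Sum>i<q. 2 * \<mu> / L * bregman (f i) (g i) xs x)"
    by (simp add: sum_distrib_left)
  also have "\<dots> \<le> (\<Sum>i<q. (x - xs) \<bullet> (g i x - g i xs))"
    by (intro sum_mono bregman_le_inner_gradient_diff has_gradient strongly_convex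
        lipschitz_gradient mu_nonneg L_pos) auto
  also have "\<dots> = (\<Sum>i<q. (x - xs) \<bullet> saga_error q g x y xs i)"
    by (simp add: sum_saga_error[OF assms] flip: inner_sum_right)
  finally have "(1 / real q) * (2 * \<mu> / L * (\<Sum>i<q. bregman (f i) (g i) xs x))
      \<le> (1 / real q) * (\<Sum>i<q. (x - xs) \<bullet> saga_error q g x y xs i)"
    by (rule mult_left_mono) simp
  then show ?thesis
    by (metis mult.left_commute)
qed

lemma mean_norm_saga_error_le:
  "(1 / real q) * (\<Sum>i<q. (norm (saga_error q g x y xs i))\<^sup>2)
    \<le> 4 * L * ((1 / real q) * (\<Sum>i<q. bregman (f i) (g i) xs x))
      + 4 * L * ((1 / real q) * (\<Sum>i<q. bregman (f i) (g i) xs (y i)))"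
proof -
  define a where "a i = g i x - g i xs" for i
  define b where "b i = g i (y i) - g i xs" for i
  have "saga_error q g x y xs i = a i - (b i - (1 / real q) *\<^sub>R (\<Sum>j<q. b j))" for i
    by (simp add: saga_error_def a_def b_def sum_subtractf algebra_simps)
  then have "(\<Sum>i<q. (norm (saga_error q g x y xs i))\<^sup>2)
      \<le> (\<Sum>i<q. 2 * (norm (a i))\<^sup>2 + 2 * (norm (b i - (1 / real q) *\<^sub>R (\<Sum>j<q. b j)))\<^sup>2)"
    by (simp add: sum_mono norm_diff_sq_le)
  also have "\<dots> = 2 * (\<Sum>i<q. (norm (a i))\<^sup>2)
      + 2 * (\<Sum>i<q. (norm (b i - (1 / real q) *\<^sub>R (\<Sum>j<q. b j)))\<^sup>2)"
    by (simp add: sum.distrib sum_distrib_left)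
  also have "\<dots> \<le> 2 * (\<Sum>i<q. (norm (a i))\<^sup>2) + 2 * (\<Sum>i<q. (norm (b i))\<^sup>2)"
    using sum_norm_sq_centered_le[of b q] by simp
  also have "\<dots> \<le> 2 * (\<Sum>i<q. 2 * L * bregman (f i) (g i) xs x)
                 + 2 * (\<Sum>i<q. 2 * L * bregman (f i) (g i) xs (y i))"
    unfolding a_def b_def
    by (intro add_mono mult_left_mono sum_mono lipschitz_gradient_norm_diff_le_bregman[where \<mu> = \<mu>]
        has_gradient strongly_convex lipschitz_gradient mu_nonneg L_pos) auto
  also have "\<dots> = 4 * L * (\<Sum>i<q. bregman (f i) (g i) xs x) + 4 * L * (\<Sum>i<q. bregman (f i) (g i) xs (y i))"
    by (simp add: sum_distrib_left mult_ac)
  finally have "(1 / real q) * (\<Sum>i<q. (norm (saga_error q g x y xs i))\<^sup>2)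
      \<le> (1 / real q) * (4 * L * (\<Sum>i<q. bregman (f i) (g i) xs x)
                       + 4 * L * (\<Sum>i<q. bregman (f i) (g i) xs (y i)))"
    by (rule mult_left_mono) simp
  then show ?thesis
    by (simp add: algebra_simps)
qed

end

section \<open>Averaging over the random draws\<close>

definition draw_mean :: "('n::finite \<Rightarrow> nat) \<Rightarrow> (('n \<Rightarrow> nat) \<Rightarrow> real) \<Rightarrow> real" where
  "draw_mean q F = (\<Sum>c\<in>PiE UNIV (\<lambda>n. {..<q n}). F c) / (\<Prod>n\<in>UNIV. real (q n))"

lemma condE_eq_draw_mean: "condE q t X om = draw_mean q (\<lambda>c. X (om(t := c)))"
  by (simp add: condE_def draw_mean_def)

lemma draw_mean_add: "draw_mean q (\<lambda>c. F c + G c) = draw_mean q F + draw_mean q G"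
  by (simp add: draw_mean_def sum.distrib add_divide_distrib)

lemma draw_mean_diff: "draw_mean q (\<lambda>c. F c - G c) = draw_mean q F - draw_mean q G"
  by (simp add: draw_mean_def sum_subtractf diff_divide_distrib)

lemma draw_mean_cmult: "draw_mean q (\<lambda>c. k * F c) = k * draw_mean q F"
  by (simp add: draw_mean_def sum_distrib_left)

lemma draw_mean_const:
  assumes "\<And>n. 0 < q n"
  shows "draw_mean q (\<lambda>c. k) = k"
proof -
  have "0 < (\<Prod>n\<in>UNIV. real (q n))" using assms by (simp add: prod_pos)
  moreover have "q n \<noteq> 0" for n using assms[of n] by simp
  ultimately show ?thesis by (simp add: draw_mean_def card_PiE)
qed

lemma draw_mean_mono:
  assumes "\<And>c. c \<in> PiE UNIV (\<lambda>n. {..<q n}) \<Longrightarrow> F c \<le> G c"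
  shows "draw_mean q F \<le> draw_mean q G"
  unfolding draw_mean_def using assms by (intro divide_right_mono sum_mono prod_nonneg) auto

lemma sum_PiE_component:
  fixes S :: "'n::finite \<Rightarrow> 'b set" and h :: "'b \<Rightarrow> real"
  assumes "\<And>m. finite (S m)"
  shows "(\<Sum>c\<in>PiE UNIV S. h (c n)) = (\<Sum>i\<in>S n. h i) * (\<Prod>m\<in>UNIV - {n}. real (card (S m)))"
proof -
  define F where "F m j = (if m = n then h j else 1)" for m j
  have "(\<Sum>c\<in>PiE UNIV S. h (c n)) = (\<Sum>c\<in>PiE UNIV S. \<Prod>m\<in>UNIV. F m (c m))"
    by (intro sum.cong) (simp_all add: F_def prod.If_cases)
  also have "\<dots> = (\<Prod>m\<in>UNIV. \<Sum>j\<in>S m. F m j)"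
    by (rule prod_sum_PiE[symmetric]) (auto simp: assms)
  also have "\<dots> = (\<Sum>j\<in>S n. F n j) * (\<Prod>m\<in>UNIV - {n}. \<Sum>j\<in>S m. F m j)"
    by (simp add: prod.remove[of UNIV n])
  also have "(\<Prod>m\<in>UNIV - {n}. \<Sum>j\<in>S m. F m j) = (\<Prod>m\<in>UNIV - {n}. real (card (S m)))"
    by (rule prod.cong) (auto simp: F_def)
  finally show ?thesis by (simp add: F_def)
qed

lemma draw_mean_sum_components:
  assumes q: "\<And>n. 0 < q n"
  shows "draw_mean q (\<lambda>c. \<Sum>n\<in>UNIV. h n (c n)) = (\<Sum>n\<in>UNIV. (1 / real (q n)) * (\<Sum>i<q n. h n i))"
proof -
  have local_mean: "(\<Sum>c\<in>PiE UNIV (\<lambda>m. {..<q m}). h n (c n)) / (\<Prod>m\<in>UNIV. real (q m))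
      = (1 / real (q n)) * (\<Sum>i<q n. h n i)" for n
  proof -
    have "(\<Prod>m\<in>UNIV. real (q m)) = real (q n) * (\<Prod>m\<in>UNIV - {n}. real (q m))"
      by (simp add: prod.remove[of UNIV n])
    moreover have "0 < (\<Prod>m\<in>UNIV - {n}. real (q m))"
      using q by (simp add: prod_pos)
    moreover have "q m \<noteq> 0" for m
      using q[of m] by simp
    ultimately show ?thesis
      by (simp add: sum_PiE_component)
  qed
  then show ?thesis
    unfolding draw_mean_def by (subst sum.swap, subst sum_divide_distrib) (simp add: local_mean)
qed

lemma ghat_error_moments:
  fixes f :: "'n::finite \<Rightarrow> nat \<Rightarrow> real^'p \<Rightarrow> real" and g :: "'n \<Rightarrow> nat \<Rightarrow> real^'p \<Rightarrow> real^'p"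
    and xs :: "real^'p" and x :: "real^'p^'n" and y :: "'n \<Rightarrow> nat \<Rightarrow> real^'p"
  assumes family: "\<And>n. smooth_strongly_convex_family (f n) (g n) (q n) \<mu> L"
    and q: "\<And>n. 0 < q n"
  defines "gs \<equiv> (\<chi> n. (1 / real (q n)) *\<^sub>R (\<Sum>i<q n. g n i xs)) :: real^'p^'n"
    and "Dx \<equiv> \<Sum>n\<in>UNIV. (1 / real (q n)) * (\<Sum>i<q n. bregman (f n i) (g n i) xs (x$n))"
    and "Dy \<equiv> \<Sum>n\<in>UNIV. (1 / real (q n)) * (\<Sum>i<q n. bregman (f n i) (g n i) xs (y n i))"
  shows "2 * \<mu> / L * Dx \<le> draw_mean q (\<lambda>c. (x - (\<chi> n. xs)) \<bullet> (ghat g q c x y - gs))"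
    and "draw_mean q (\<lambda>c. (norm (ghat g q c x y - gs))\<^sup>2) \<le> 4 * L * Dx + 4 * L * Dy"
proof -
  let ?e = "\<lambda>n. saga_error (q n) (g n) (x$n) (y n) xs"
  have component: "ghat g q c x y $ n - gs $ n = ?e n (c n)" for c n
    by (simp add: ghat_def gs_def saga_error_def)
  have "draw_mean q (\<lambda>c. (x - (\<chi> n. xs)) \<bullet> (ghat g q c x y - gs))
      = draw_mean q (\<lambda>c. \<Sum>n\<in>UNIV. (x$n - xs) \<bullet> ?e n (c n))"
    by (subst inner_vec_def) (simp add: component)
  also have "\<dots> = (\<Sum>n\<in>UNIV. (1 / real (q n)) * (\<Sum>i<q n. (x$n - xs) \<bullet> ?e n i))"
    using q by (rule draw_mean_sum_components)
  also have "\<dots> \<ge> (\<Sum>n\<in>UNIV. 2 * \<mu> / L * ((1 / real (q n)) * (\<Sum>i<q n. bregman (f n i) (g n i) xs (x$n))))"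
    using smooth_strongly_convex_family.mean_inner_saga_error_ge[OF family q] by (intro sum_mono)
  finally show "2 * \<mu> / L * Dx \<le> draw_mean q (\<lambda>c. (x - (\<chi> n. xs)) \<bullet> (ghat g q c x y - gs))"
    by (simp add: Dx_def sum_distrib_left)
  have "draw_mean q (\<lambda>c. (norm (ghat g q c x y - gs))\<^sup>2)
      = draw_mean q (\<lambda>c. \<Sum>n\<in>UNIV. (norm (?e n (c n)))\<^sup>2)"
    by (simp only: power2_norm_eq_inner, subst inner_vec_def) (simp add: component)
  also have "\<dots> = (\<Sum>n\<in>UNIV. (1 / real (q n)) * (\<Sum>i<q n. (norm (?e n i))\<^sup>2))"
    using q by (rule draw_mean_sum_components)
  also have "\<dots> \<le> (\<Sum>n\<in>UNIV. 4 * L * ((1 / real (q n)) * (\<Sum>i<q n. bregman (f n i) (g n i) xs (x$n)))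
                         + 4 * L * ((1 / real (q n)) * (\<Sum>i<q n. bregman (f n i) (g n i) xs (y n i))))"
    using smooth_strongly_convex_family.mean_norm_saga_error_le[OF family] by (intro sum_mono)
  finally show "draw_mean q (\<lambda>c. (norm (ghat g q c x y - gs))\<^sup>2) \<le> 4 * L * Dx + 4 * L * Dy"
    by (simp add: Dx_def Dy_def sum.distrib sum_distrib_left)
qed

section \<open>DSA as a primal-dual iteration\<close>

lemma dsa_depends_on_past:
  "(\<And>s. s < T \<Longrightarrow> om s = om' s) \<Longrightarrow> dsa W Wt \<alpha> g q x0 om T = dsa W Wt \<alpha> g q x0 om' T"
proof (induction T rule: less_induct)
  case (less T)
  consider "T = 0" | "T = Suc 0" | t where "T = Suc (Suc t)"
    by (metis not0_implies_Suc)
  then show ?case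
    by cases (use less in \<open>simp_all add: Let_def\<close>)
qed

lemma dsa_primal_dual_form:
  fixes U W Wt :: "real^'n::finite^'n" and \<alpha> :: real and g :: "'n \<Rightarrow> nat \<Rightarrow> real^'p \<Rightarrow> real^'p"
    and q :: "'n \<Rightarrow> nat" and x0 :: "real^'p^'n" and om :: "nat \<Rightarrow> 'n \<Rightarrow> nat"
  assumes UU: "U ** U = Wt - W"
  defines "X s \<equiv> fst (dsa W Wt \<alpha> g q x0 om s)" and "Y s \<equiv> snd (dsa W Wt \<alpha> g q x0 om s)"
  shows "X (Suc t) = Wt ** X t - U ** (\<Sum>s\<le>t. U ** X s) - \<alpha> *\<^sub>R ghat g q (om t) (X t) (Y t)"
proof (induction t)
  case 0
  have "U ** (U ** X 0) = Wt ** X 0 - W ** X 0"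
    by (simp add: matrix_mul_assoc UU matrix_diff_rdistrib)
  then show ?case by (simp add: X_def Y_def Let_def)
next
  case (Suc t)
  define G where "G s = ghat g q (om s) (X s) (Y s)" for s
  define V where "V s = (\<Sum>r\<le>s. U ** X r)" for s
  have step: "X (Suc (Suc t)) = (mat 1 + W) ** X (Suc t) - Wt ** X t - \<alpha> *\<^sub>R (G (Suc t) - G t)"
    by (simp add: X_def Y_def G_def Let_def)
  have IH: "\<alpha> *\<^sub>R G t = Wt ** X t - U ** V t - X (Suc t)"
    using Suc by (simp add: G_def V_def)
  have UUX: "U ** (U ** X (Suc t)) = Wt ** X (Suc t) - W ** X (Suc t)"
    by (simp add: matrix_mul_assoc UU matrix_diff_rdistrib)
  have V: "V (Suc t) = V t + U ** X (Suc t)"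
    by (simp add: V_def)
  have "X (Suc (Suc t)) = W ** X (Suc t) - U ** V t - \<alpha> *\<^sub>R G (Suc t)"
    unfolding step scaleR_diff_right IH by (simp add: matrix_add_rdistrib algebra_simps)
  also have "\<dots> = Wt ** X (Suc t) - U ** V (Suc t) - \<alpha> *\<^sub>R G (Suc t)"
    unfolding V matrix_add_ldistrib UUX by (simp add: algebra_simps)
  finally show ?case
    by (simp add: G_def V_def)
qed

lemma dsa_resample_step:
  fixes W Wt :: "real^'n::finite^'n" and \<alpha> :: real and g :: "'n \<Rightarrow> nat \<Rightarrow> real^'p \<Rightarrow> real^'p"
    and q :: "'n \<Rightarrow> nat" and x0 :: "real^'p^'n" and om :: "nat \<Rightarrow> 'n \<Rightarrow> nat"
  assumes UU: "msqrt (Wt - W) ** msqrt (Wt - W) = Wt - W"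
  defines "X w s \<equiv> fst (dsa W Wt \<alpha> g q x0 w s)" and "Y w s \<equiv> snd (dsa W Wt \<alpha> g q x0 w s)"
    and "V w s \<equiv> dsa_v W Wt \<alpha> g q x0 w s" and "U \<equiv> msqrt (Wt - W)"
  shows "X (om(t := c)) t = X om t" and "Y (om(t := c)) t = Y om t"
    and "V (om(t := c)) t = V om t"
    and "X (om(t := c)) (Suc t) = Wt ** X om t - U ** V om t - \<alpha> *\<^sub>R ghat g q c (X om t) (Y om t)"
    and "V (om(t := c)) (Suc t) = V om t + U ** X (om(t := c)) (Suc t)"
proof -
  have past: "dsa W Wt \<alpha> g q x0 (om(t := c)) s = dsa W Wt \<alpha> g q x0 om s" if "s \<le> t" for s
    using that by (intro dsa_depends_on_past) auto
  show X: "X (om(t := c)) t = X om t" and Y: "Y (om(t := c)) t = Y om t"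
    by (simp_all add: X_def Y_def past)
  show V: "V (om(t := c)) t = V om t"
    by (simp add: V_def dsa_v_def past)
  show "X (om(t := c)) (Suc t) = Wt ** X om t - U ** V om t - \<alpha> *\<^sub>R ghat g q c (X om t) (Y om t)"
    using dsa_primal_dual_form[OF UU, of \<alpha> g q x0 "om(t := c)" t] X Y V
    by (simp add: X_def Y_def V_def U_def dsa_v_def)
  show "V (om(t := c)) (Suc t) = V om t + U ** X (om(t := c)) (Suc t)"
    using V by (simp add: V_def U_def X_def dsa_v_def)
qed

section \<open>Expected descent in one step\<close>

lemma neg_inner_le_young:
  fixes d e :: "'a::real_inner"
  assumes "0 < \<eta>"
  shows "- (d \<bullet> e) \<le> \<eta> * (norm d)\<^sup>2 + (norm e)\<^sup>2 / (4 * \<eta>)"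
proof -
  have "0 \<le> (norm ((2 * \<eta>) *\<^sub>R d + e))\<^sup>2 / (4 * \<eta>)"
    using assms by simp
  also have "\<dots> = \<eta> * (norm d)\<^sup>2 + d \<bullet> e + (norm e)\<^sup>2 / (4 * \<eta>)"
    using assms unfolding power2_norm_eq_inner
    by (simp add: inner_add_left inner_add_right inner_commute power2_eq_square field_simps)
  finally show ?thesis by linarith
qed

text \<open>The optimality conditions turn the update into
  \<open>(I + W - 2Wt)(x' - x*) + Wt(x' - x) + U(v' - v*) + \<alpha>(g - g*) = 0\<close>; pairing it with
  \<open>x' - x*\<close> and expanding the squares gives the identity.\<close>
lemma primal_dual_step_identity:
  fixes W Wt U :: "real^'n^'n" and x v x' v' xstar vs gc gs :: "real^'p^'n"
  assumes Wt_sym: "transpose Wt = Wt" and U_sym: "transpose U = U" and UU: "U ** U = Wt - W"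
    and W_fix: "W ** xstar = xstar" and Wt_fix: "Wt ** xstar = xstar"
    and opt: "\<alpha> *\<^sub>R gs + U ** vs = 0"
    and x': "x' = Wt ** x - U ** v - \<alpha> *\<^sub>R gc" and v': "v' = v + U ** x'"
  shows "qf Wt (x' - xstar) + (norm (v' - vs))\<^sup>2
    = qf Wt (x - xstar) + (norm (v - vs))\<^sup>2 - 2 * qf (mat 1 + W - 2 *\<^sub>R Wt) (x' - xstar)
      - qf Wt (x' - x) - (norm (v' - v))\<^sup>2 - 2 * \<alpha> * ((x' - xstar) \<bullet> (gc - gs))"
proof -
  define M where "M = mat 1 + W - 2 *\<^sub>R Wt"
  define a where "a = x' - xstar"
  define d where "d = x' - x"
  have "(U ** xstar) \<bullet> (U ** xstar) = 0"
    using inner_matrix_mult_symmetric[OF U_sym, of "U ** xstar" xstar]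
    by (simp add: matrix_mul_assoc UU matrix_diff_rdistrib W_fix Wt_fix inner_commute)
  then have U_xstar: "U ** xstar = 0" by simp
  have M_mult: "M ** y = y + W ** y - (Wt ** y + Wt ** y)" for y :: "real^'p^'n"
    unfolding M_def matrix_diff_rdistrib matrix_add_rdistrib scalar_matrix_assoc[symmetric]
    by (simp add: scaleR_2)
  have Ma: "M ** a = x' + W ** x' - (Wt ** x' + Wt ** x')"
    by (simp add: a_def matrix_diff_ldistrib M_mult W_fix Wt_fix)
  have Uv: "U ** (v' - vs) = U ** v + (Wt ** x' - W ** x') - U ** vs"
    by (simp add: v' matrix_diff_ldistrib matrix_add_ldistrib matrix_mul_assoc UU matrix_diff_rdistrib)
  have "M ** a + Wt ** d + U ** (v' - vs) + \<alpha> *\<^sub>R (gc - gs)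
      = (x' - (Wt ** x - U ** v - \<alpha> *\<^sub>R gc)) - (\<alpha> *\<^sub>R gs + U ** vs)"
    by (simp only: Ma Uv) (simp add: d_def matrix_diff_ldistrib algebra_simps)
  then have "a \<bullet> (M ** a + Wt ** d + U ** (v' - vs) + \<alpha> *\<^sub>R (gc - gs)) = 0"
    using x' opt by simp
  moreover have "U ** a = v' - v"
    by (simp add: a_def v' matrix_diff_ldistrib U_xstar)
  ultimately have "qf M a + a \<bullet> (Wt ** d) + (v' - v) \<bullet> (v' - vs) + \<alpha> * (a \<bullet> (gc - gs)) = 0"
    by (simp only: inner_add_right inner_scaleR_right qf_eq_inner
        inner_matrix_mult_symmetric[OF U_sym, of a])
  moreover have "qf Wt (x - xstar) = qf Wt a - 2 * (a \<bullet> (Wt ** d)) + qf Wt d"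
    using inner_matrix_mult_symmetric[OF Wt_sym, of d a]
    by (simp add: qf_eq_inner a_def d_def matrix_diff_ldistrib inner_diff_left inner_diff_right
        inner_commute)
  moreover have "(norm (v - vs))\<^sup>2 = (norm (v' - vs))\<^sup>2 - 2 * ((v' - v) \<bullet> (v' - vs)) + (norm (v' - v))\<^sup>2"
    by (simp add: power2_norm_eq_inner inner_diff_left inner_diff_right inner_commute)
  ultimately show ?thesis
    unfolding M_def[symmetric] a_def[symmetric] d_def[symmetric] by linarith
qed

lemma primal_dual_descent_step:
  fixes W Wt U :: "real^'n^'n" and x v x' v' xstar vs gc gs :: "real^'p^'n"
  assumes Wt_sym: "transpose Wt = Wt" and U_sym: "transpose U = U" and UU: "U ** U = Wt - W"
    and W_fix: "W ** xstar = xstar" and Wt_fix: "Wt ** xstar = xstar"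
    and opt: "\<alpha> *\<^sub>R gs + U ** vs = 0"
    and x': "x' = Wt ** x - U ** v - \<alpha> *\<^sub>R gc" and v': "v' = v + U ** x'"
    and \<alpha>: "0 < \<alpha>" and \<eta>: "0 < \<eta>"
  shows "qf Wt (x' - xstar) + (norm (v' - vs))\<^sup>2
    \<le> qf Wt (x - xstar) + (norm (v - vs))\<^sup>2 - 2 * qf (mat 1 + W - 2 *\<^sub>R Wt) (x' - xstar)
      - qf (Wt - (2 * \<alpha> * \<eta>) *\<^sub>R mat 1) (x' - x) - (norm (v' - v))\<^sup>2
      - 2 * \<alpha> * ((x - xstar) \<bullet> (gc - gs)) + \<alpha> / (2 * \<eta>) * (norm (gc - gs))\<^sup>2"
proof -
  define d where "d = x' - x"
  define e where "e = gc - gs"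
  have "qf (Wt - (2 * \<alpha> * \<eta>) *\<^sub>R mat 1) d = qf Wt d - 2 * \<alpha> * \<eta> * (norm d)\<^sup>2"
    by (simp add: qf_eq_inner matrix_diff_rdistrib scalar_matrix_assoc[symmetric]
        inner_diff_right power2_norm_eq_inner)
  moreover have "\<alpha> * ((x' - xstar) \<bullet> e) = \<alpha> * ((x - xstar) \<bullet> e) + \<alpha> * (d \<bullet> e)"
    by (simp add: d_def algebra_simps)
  moreover have "2 * \<alpha> * (- (d \<bullet> e)) \<le> 2 * \<alpha> * (\<eta> * (norm d)\<^sup>2 + (norm e)\<^sup>2 / (4 * \<eta>))"
    using neg_inner_le_young[OF \<eta>, of d e] \<alpha> by (intro mult_left_mono) auto
  moreover have "2 * \<alpha> * (\<eta> * (norm d)\<^sup>2 + (norm e)\<^sup>2 / (4 * \<eta>))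
      = 2 * \<alpha> * \<eta> * (norm d)\<^sup>2 + \<alpha> / (2 * \<eta>) * (norm e)\<^sup>2"
    using \<eta> by (simp add: field_simps)
  ultimately show ?thesis
    using primal_dual_step_identity[OF assms(1-8)]
    unfolding d_def[symmetric] e_def[symmetric] by linarith
qed

lemma draw_mean_descent_bound:
  assumes q: "\<And>n. 0 < q n"
    and step: "\<And>c. F c \<le> K - 2 * A c - B c - C c - 2 * \<alpha> * P c + \<alpha> / (2 * \<eta>) * Q c"
    and P: "2 * \<mu> / L * Dx \<le> draw_mean q P"
    and Q: "draw_mean q Q \<le> 4 * L * Dx + 4 * L * Dy"
    and Dx: "0 \<le> Dx" and Dy: "0 \<le> Dy" and \<mu>_le_L: "\<mu> \<le> L"
    and \<alpha>: "0 < \<alpha>" and \<eta>: "0 < \<eta>" and L: "0 < L"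
  shows "draw_mean q F \<le> K - 2 * draw_mean q A + 4 * \<alpha> * L / \<eta> * Dy - draw_mean q B
    - draw_mean q C - (4 * \<alpha> * \<mu> / L - 2 * \<alpha> * (2 * L - \<mu>) / \<eta>) * Dx"
proof -
  have "draw_mean q F \<le> draw_mean q (\<lambda>c. K - 2 * A c - B c - C c - 2 * \<alpha> * P c + \<alpha> / (2 * \<eta>) * Q c)"
    using step by (intro draw_mean_mono)
  also have "\<dots> = K - 2 * draw_mean q A - draw_mean q B - draw_mean q C
      - 2 * \<alpha> * draw_mean q P + \<alpha> / (2 * \<eta>) * draw_mean q Q"
    by (simp only: draw_mean_add draw_mean_diff draw_mean_cmult draw_mean_const[OF q])
  finally have F: "draw_mean q F \<le> \<dots>" .
  have "4 * \<alpha> * \<mu> / L * Dx \<le> 2 * \<alpha> * draw_mean q P"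
    using mult_left_mono[OF P, of "2 * \<alpha>"] \<alpha> by simp
  moreover have "\<alpha> / (2 * \<eta>) * draw_mean q Q \<le> 2 * \<alpha> * L / \<eta> * Dx + 2 * \<alpha> * L / \<eta> * Dy"
    using mult_left_mono[OF Q, of "\<alpha> / (2 * \<eta>)"] \<alpha> \<eta> by (simp add: field_simps)
  moreover have "2 * \<alpha> * L / \<eta> * Dy \<le> 4 * \<alpha> * L / \<eta> * Dy"
    using Dy \<alpha> \<eta> L by (intro mult_right_mono divide_right_mono) auto
  moreover have "2 * \<alpha> * L / \<eta> * Dx \<le> 2 * \<alpha> * (2 * L - \<mu>) / \<eta> * Dx"
    using Dx \<alpha> \<eta> \<mu>_le_L by (intro mult_right_mono divide_right_mono) auto
  ultimately show ?thesis
    using F by (simp add: left_diff_distrib)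
qed

theorem lemma4:
  fixes E :: "'n::finite \<Rightarrow> 'n \<Rightarrow> bool"
    and W Wt :: "real^'n^'n"
    and q :: "'n \<Rightarrow> nat"
    and f :: "'n \<Rightarrow> nat \<Rightarrow> real^'p::finite \<Rightarrow> real"
    and g :: "'n \<Rightarrow> nat \<Rightarrow> real^'p \<Rightarrow> real^'p"
    and \<mu> L \<alpha> \<eta> :: real
    and xs :: "real^'p" and vs :: "real^'p^'n" and x0 :: "real^'p^'n"
    and om :: "nat \<Rightarrow> 'n \<Rightarrow> nat"
    and t :: nat
  assumes E_sym: "\<And>n m. E n m \<Longrightarrow> E m n"
    and connected: "\<And>n m. E\<^sup>*\<^sup>* n m"
    and W_sparse: "\<And>n m. W$n$m \<noteq> 0 \<Longrightarrow> m = n \<or> E n m"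
    and Wt_sparse: "\<And>n m. Wt$n$m \<noteq> 0 \<Longrightarrow> m = n \<or> E n m"
    and W_sym: "transpose W = W" and Wt_sym: "transpose Wt = Wt"
    and null_IWt: "(mat 1 - Wt) *v ones = 0"
    and null_IW: "{z. (mat 1 - W) *v z = 0} = span {ones}"
    and null_WtW: "{z. (Wt - W) *v z = 0} = span {ones}"
    and W_le_Wt: "psd (Wt - W)"
    and Wt_le: "psd ((1/2) *\<^sub>R (mat 1 + W) - Wt)"
    and Wt_pd: "pd Wt"
    and q_pos: "\<And>n. 0 < q n"
    and grad: "\<And>n i x. i < q n \<Longrightarrow> (f n i has_derivative (\<lambda>h. g n i x \<bullet> h)) (at x)"
    and sconv: "\<And>n i. i < q n \<Longrightarrow> mu_strongly_convex \<mu> (f n i)"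
    and lips: "\<And>n i. i < q n \<Longrightarrow> L-lipschitz_on UNIV (g n i)"
    and mu_pos: "0 < \<mu>" and L_pos: "0 < L"
    and xs_min: "\<And>z. (\<Sum>n\<in>UNIV. (1 / real (q n)) * (\<Sum>i<q n. f n i xs))
                     \<le> (\<Sum>n\<in>UNIV. (1 / real (q n)) * (\<Sum>i<q n. f n i z))"
    and vs_range: "\<exists>w. vs = msqrt (Wt - W) ** w"
    and vs_opt: "\<alpha> *\<^sub>R (\<chi> n. (1 / real (q n)) *\<^sub>R (\<Sum>i<q n. g n i xs)) + msqrt (Wt - W) ** vs = 0"
    and alpha_pos: "0 < \<alpha>" and eta_pos: "0 < \<eta>"
    and om_valid: "\<And>s n. om s n < q n"
  shows
   "let xstar = (\<chi> n. xs) :: real^'p^'n;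
        X = (\<lambda>om s. fst (dsa W Wt \<alpha> g q x0 om s));
        Y = (\<lambda>om s. snd (dsa W Wt \<alpha> g q x0 om s));
        V = (\<lambda>om s. dsa_v W Wt \<alpha> g q x0 om s);
        normG = (\<lambda>x v. qf Wt x + (norm v)\<^sup>2);
        pt = (\<Sum>n\<in>UNIV. (1 / real (q n)) * (\<Sum>i<q n.
                f n i (Y om t n i) - f n i xs - g n i xs \<bullet> (Y om t n i - xs)));
        bregf = (\<Sum>n\<in>UNIV. (1 / real (q n)) * (\<Sum>i<q n.
                f n i (X om t $ n) - f n i xs - g n i xs \<bullet> (X om t $ n - xs)))
    in condE q t (\<lambda>w. normG (X w (Suc t) - xstar) (V w (Suc t) - vs)) om
       \<le> normG (X om t - xstar) (V om t - vs)
         - 2 * condE q t (\<lambda>w. qf (mat 1 + W - 2 *\<^sub>R Wt) (X w (Suc t) - xstar)) om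
         + (4 * \<alpha> * L / \<eta>) * pt
         - condE q t (\<lambda>w. qf (Wt - (2 * \<alpha> * \<eta>) *\<^sub>R mat 1) (X w (Suc t) - X w t)) om
         - condE q t (\<lambda>w. (norm (V w (Suc t) - V w t))\<^sup>2) om
         - (4 * \<alpha> * \<mu> / L - 2 * \<alpha> * (2 * L - \<mu>) / \<eta>) * bregf"
proof -
  define U where "U = msqrt (Wt - W)"
  have "transpose (Wt - W) = Wt - W"
    using W_sym Wt_sym by (simp add: transpose_diff)
  then have U_sym: "transpose U = U" and UU: "U ** U = Wt - W"
    using msqrt_psd_square_root[OF _ W_le_Wt] by (simp_all add: U_def)
  define xstar :: "real^'p^'n" where "xstar = (\<chi> n. xs)"
  have "ones \<in> {z. (mat 1 - W) *v z = 0}"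
    unfolding null_IW by (rule span_base) simp
  then have W_fix: "W ** xstar = xstar"
    unfolding xstar_def by (intro matrix_mult_consensus_fixed) simp
  have Wt_fix: "Wt ** xstar = xstar"
    using null_IWt unfolding xstar_def by (rule matrix_mult_consensus_fixed)
  have family: "smooth_strongly_convex_family (f n) (g n) (q n) \<mu> L" for n
    using grad sconv lips mu_pos L_pos by unfold_locales auto
  have "\<mu> \<le> L"
    using smooth_strongly_convex_family.mu_le_L[OF family q_pos, of "0::real^'p" "\<chi> i. 1"]
    by (simp add: vec_eq_iff)
  note resample = dsa_resample_step[OF UU[unfolded U_def], of \<alpha> g q x0 om t, folded U_def]
  note moments = ghat_error_moments[OF family q_pos, where xs = xs
      and x = "fst (dsa W Wt \<alpha> g q x0 om t)" and y = "snd (dsa W Wt \<alpha> g q x0 om t)", folded xstar_def]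
  note descent = draw_mean_descent_bound[OF q_pos primal_dual_descent_step[OF Wt_sym U_sym UU W_fix
        Wt_fix vs_opt[folded U_def] resample(4) resample(5) alpha_pos eta_pos] moments
      sum_nonneg[OF smooth_strongly_convex_family.mean_bregman_nonneg[OF family]]
      sum_nonneg[OF smooth_strongly_convex_family.mean_bregman_nonneg[OF family]]
      \<open>\<mu> \<le> L\<close> alpha_pos eta_pos L_pos]
  show ?thesis
    unfolding Let_def condE_eq_draw_mean resample(1-3)
    using descent unfolding bregman_def xstar_def .
qed

end
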